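(* In the standard LLP setup, for all $N,M\ge1$: $L(G,\gamma^M_{cons})\subseteq L(G,\gamma^N_{optm})$.
   Context: Standard LLP setup. $\Sigma=\Sigma_c\,\dot\cup\,\Sigma_{uc}$ is a finite alphabet partitioned into controllable and uncontrollable events. The plant $G$ has generated language $L(G)$ and marked language $L_m(G)$ with $L(G)=\overline{L_m(G)}$ ($\overline{M}$ = set of prefixes of strings in $M$). The legal language $K\subseteq L_m(G)$ satisfies $K=\overline{K}\cap L_m(G)$. For a prefix-closed $L$, $M$ is controllable w.r.t. $L$ if $\overline{M}\Sigma_{uc}\cap L\subseteq\overline{M}$. For a language $L$ and $s\in\Sigma^*$: $L/s=\{t: st\in L\}$; $L|_N=\{t\in L:|t|\le N\}$; $\Sigma_{L(G)}(s)=\{\sigma\in\Sigma: s\sigma\in L(G)\}$. $M^{\uparrow/s|_N}$ is the supremal sublanguage of $M$ controllable w.r.t. $L(G)/s|_N$. Conservative attitude: $f^N_{cons}(s)=[K/s|_{N-1}]^{\uparrow/s|_N}$; optimistic attitude: $f^N_{optm}(s)=[K/s|_N\cup(\overline{K}/s|_N\setminus\overline{K}/s|_{N-1})]^{\uparrow/s|_N}$. For $a\in\{cons,optm\}$ the control policy is $\gamma^N_a(s)=(\overline{f^N_a(s)}\cap\Sigma)\cup(\Sigma_{uc}\cap\Sigma_{L(G)}(s))$. Closed-loop language $L(G,\gamma)$: $\epsilon\in L(G,\gamma)$, and $s\sigma\in L(G,\gamma)$ iff $s\in L(G,\gamma)$, $s\sigma\in L(G)$, $\sigma\in\gamma(s)$.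 *)

theory Defs
  imports Main
begin

text \<open>Strings over a finite alphabet of type 'a (the alphabet is UNIV :: 'a set, 'a finite)
  are lists; languages are sets of lists.\<close>

definition pre :: "'a list set \<Rightarrow> 'a list set" where
  "pre M = {t. \<exists>u. t @ u \<in> M}"

definition quot :: "'a list set \<Rightarrow> 'a list \<Rightarrow> 'a list set" where
  "quot L s = {t. s @ t \<in> L}"

definition trunc :: "'a list set \<Rightarrow> nat \<Rightarrow> 'a list set" where
  "trunc L N = {t \<in> L. length t \<le> N}"

definition controllable :: "'a set \<Rightarrow> 'a list set \<Rightarrow> 'a list set \<Rightarrow> bool" where
  "controllable Euc M L \<longleftrightarrow>
     (\<forall>t \<sigma>. t \<in> pre M \<and> \<sigma> \<in> Euc \<and> t @ [\<sigma>] \<in> L \<longrightarrow> t @ [\<sigma>] \<in> pre M)"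

definition supcon :: "'a set \<Rightarrow> 'a list set \<Rightarrow> 'a list set \<Rightarrow> 'a list set" where
  "supcon Euc M L = \<Union>{M'. M' \<subseteq> M \<and> controllable Euc M' L}"

definition f_cons :: "'a set \<Rightarrow> 'a list set \<Rightarrow> 'a list set \<Rightarrow> nat \<Rightarrow> 'a list \<Rightarrow> 'a list set" where
  "f_cons Euc LG K N s = supcon Euc (trunc (quot K s) (N - 1)) (trunc (quot LG s) N)"

definition f_optm :: "'a set \<Rightarrow> 'a list set \<Rightarrow> 'a list set \<Rightarrow> nat \<Rightarrow> 'a list \<Rightarrow> 'a list set" where
  "f_optm Euc LG K N s = supcon Euc
     (trunc (quot K s) N \<union> (trunc (quot (pre K) s) N - trunc (quot (pre K) s) (N - 1)))
     (trunc (quot LG s) N)"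

definition policy :: "'a set \<Rightarrow> 'a list set \<Rightarrow> ('a list \<Rightarrow> 'a list set) \<Rightarrow> 'a list \<Rightarrow> 'a set" where
  "policy Euc LG F s = {\<sigma>. [\<sigma>] \<in> pre (F s)} \<union> (Euc \<inter> {\<sigma>. s @ [\<sigma>] \<in> LG})"

inductive_set closed_loop :: "'a list set \<Rightarrow> ('a list \<Rightarrow> 'a set) \<Rightarrow> 'a list set"
  for LG :: "'a list set" and \<gamma> :: "'a list \<Rightarrow> 'a set" where
  Nil: "[] \<in> closed_loop LG \<gamma>"
| snoc: "s \<in> closed_loop LG \<gamma> \<Longrightarrow> s @ [\<sigma>] \<in> LG \<Longrightarrow> \<sigma> \<in> \<gamma> s \<Longrightarrow> s @ [\<sigma>] \<in> closed_loop LG \<gamma>"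

end

theory Submission
  imports Defs
begin

text \<open>Any word of the conservative supervisor's controllable sublanguage has length below M,
  so every controllable extension of a prefix of length at most N stays inside it. Cutting
  that sublanguage at horizon N yields a language that is controllable with respect to
  the N-step lookahead tree and lies in the optimistic target language, since its cut-off
  words of length exactly N are pending strings. Hence the optimistic supervisor enables
  every event the conservative one enables, and induction on the closed loop concludes.\<close>

lemma pre_mono: "A \<subseteq> B \<Longrightarrow> pre A \<subseteq> pre B"
  unfolding pre_def by blast

lemma quot_pre: "quot (pre K) s = pre (quot K s)"
  unfolding quot_def pre_def by auto

lemma supcon_subset: "supcon Euc M L \<subseteq> M"
  unfolding supcon_def by blast

lemma supcon_upper: "M' \<subseteq> M \<Longrightarrow> controllable Euc M' L \<Longrightarrow> M' \<subseteq> supcon Euc M L"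
  unfolding supcon_def by blast

lemma controllable_supcon: "controllable Euc (supcon Euc M L) L"
  unfolding controllable_def supcon_def pre_def by blast

definition horizon_cut :: "'a list set \<Rightarrow> nat \<Rightarrow> 'a list set" where
  "horizon_cut A N = {t \<in> pre A. length t \<le> N \<and> (t \<in> A \<or> length t = N)}"

lemma pre_horizon_cut: "pre (horizon_cut A N) = trunc (pre A) N"
proof
  show "pre (horizon_cut A N) \<subseteq> trunc (pre A) N"
    unfolding horizon_cut_def pre_def trunc_def by auto
next
  show "trunc (pre A) N \<subseteq> pre (horizon_cut A N)"
  proof
    fix t assume "t \<in> trunc (pre A) N"
    then obtain w where tw: "t @ w \<in> A" and lt: "length t \<le> N"
      unfolding trunc_def pre_def by auto
    have tw_pre: "t @ w \<in> pre A"
      using tw unfolding pre_def by (metis append_Nil2 mem_Collect_eq)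
    show "t \<in> pre (horizon_cut A N)"
    proof (cases "length (t @ w) \<le> N")
      case True
      then have "t @ w \<in> horizon_cut A N"
        using tw tw_pre unfolding horizon_cut_def by auto
      then show ?thesis unfolding pre_def by blast
    next
      case False
      have "take N (t @ w) \<in> pre A"
        using tw unfolding pre_def by (metis append_take_drop_id mem_Collect_eq)
      then have "take N (t @ w) \<in> horizon_cut A N"
        using False unfolding horizon_cut_def by auto
      moreover have "take N (t @ w) = t @ take (N - length t) w"
        using lt by simp
      ultimately show ?thesis unfolding pre_def by auto
    qed
  qed
qed

lemma horizon_cut_subset_pending:
  assumes "A \<subseteq> Q" and "N \<ge> 1"
  shows "horizon_cut A N \<subseteq> trunc Q N \<union> (trunc (pre Q) N - trunc (pre Q) (N - 1))"
  using assms pre_mono[OF assms(1)] unfolding horizon_cut_def trunc_def by auto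

lemma controllable_horizon_cut:
  assumes "controllable Euc A (trunc L M)" and "\<forall>t \<in> A. length t < M"
  shows "controllable Euc (horizon_cut A N) (trunc L N)"
  unfolding controllable_def
proof (intro allI impI)
  fix t e assume h: "t \<in> pre (horizon_cut A N) \<and> e \<in> Euc \<and> t @ [e] \<in> trunc L N"
  then have tA: "t \<in> pre A"
    unfolding pre_horizon_cut trunc_def by auto
  then obtain w where "t @ w \<in> A" unfolding pre_def by auto
  then have "length t < M" using assms(2) by fastforce
  then have "t @ [e] \<in> trunc L M" using h unfolding trunc_def by auto
  then have "t @ [e] \<in> pre A" using assms(1) tA h unfolding controllable_def by blast
  then show "t @ [e] \<in> pre (horizon_cut A N)"
    using h unfolding pre_horizon_cut trunc_def by auto
qed

lemma trunc_pre_f_cons_subset_pre_f_optm: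
  assumes "N \<ge> 1" and "M \<ge> 1"
  shows "trunc (pre (f_cons Euc LG K M s)) N \<subseteq> pre (f_optm Euc LG K N s)"
proof -
  let ?A = "f_cons Euc LG K M s"
  have A_sub: "?A \<subseteq> trunc (quot K s) (M - 1)"
    unfolding f_cons_def by (rule supcon_subset)
  have "controllable Euc (horizon_cut ?A N) (trunc (quot LG s) N)"
  proof (rule controllable_horizon_cut)
    show "controllable Euc ?A (trunc (quot LG s) M)"
      unfolding f_cons_def by (rule controllable_supcon)
    show "\<forall>t \<in> ?A. length t < M"
      using A_sub assms(2) unfolding trunc_def by auto
  qed
  moreover have "horizon_cut ?A N \<subseteq>
      trunc (quot K s) N \<union> (trunc (quot (pre K) s) N - trunc (quot (pre K) s) (N - 1))"
    unfolding quot_pre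
    using A_sub assms(1) by (intro horizon_cut_subset_pending) (auto simp: trunc_def)
  ultimately have "horizon_cut ?A N \<subseteq> f_optm Euc LG K N s"
    unfolding f_optm_def by (rule supcon_upper[rotated])
  then show ?thesis
    using pre_mono pre_horizon_cut by metis
qed

lemma policy_mono:
  assumes "\<And>\<sigma>. [\<sigma>] \<in> pre (F s) \<Longrightarrow> [\<sigma>] \<in> pre (F' s)"
  shows "policy Euc LG F s \<subseteq> policy Euc LG F' s"
  using assms unfolding policy_def by blast

lemma closed_loop_mono:
  assumes "\<And>s. \<gamma> s \<subseteq> \<gamma>' s"
  shows "closed_loop LG \<gamma> \<subseteq> closed_loop LG \<gamma>'"
proof
  fix x assume "x \<in> closed_loop LG \<gamma>"
  then show "x \<in> closed_loop LG \<gamma>'"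
    by induction (use assms in \<open>auto intro: closed_loop.intros\<close>)
qed

theorem theorem8:
  fixes Euc :: "('a::finite) set"
    and LG Lm K :: "'a list set"
    and N M :: nat
  assumes "LG = pre Lm"
    and "K \<subseteq> Lm"
    and "K = pre K \<inter> Lm"
    and "N \<ge> 1" and "M \<ge> 1"
  shows "closed_loop LG (policy Euc LG (f_cons Euc LG K M))
         \<subseteq> closed_loop LG (policy Euc LG (f_optm Euc LG K N))"
proof (intro closed_loop_mono policy_mono)
  fix s \<sigma> assume "[\<sigma>] \<in> pre (f_cons Euc LG K M s)"
  then have "[\<sigma>] \<in> trunc (pre (f_cons Euc LG K M s)) N"
    using \<open>N \<ge> 1\<close> unfolding trunc_def by simp
  then show "[\<sigma>] \<in> pre (f_optm Euc LG K N s)"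
    using trunc_pre_f_cons_subset_pre_f_optm[OF \<open>N \<ge> 1\<close> \<open>M \<ge> 1\<close>] by blast
qed

end
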